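(* Let $\mathcal X$ be finite with $N=|\mathcal X|\ge2$, $0<c<1/N$ and $\varepsilon\ge0$. Then $$\eta_{\mathrm{TV}}(\varepsilon,c)=\sup_{K\in\mathcal M(\varepsilon,c)}\eta^{\mathcal Q_{\mathcal X}(c)}_{\mathrm{TV}}(K).$$
   Context: A kernel $K$ is a row-stochastic matrix with entries $K_{Y|X=x}(y)$, $(K\circ P_X)(y)=\sum_x K_{Y|X=x}(y)P_X(x)$. PML: $\ell_{K\times P_X}(X\to y)=\log\frac{\max_x K_{Y|X=x}(y)}{(K\circ P_X)(y)}$ for full-support $P_X$ and $(K\circ P_X)(y)>0$. $\mathcal Q_{\mathcal X}(c)=\{P_X\in\mathcal P(\mathcal X):\min_x P_X(x)\ge c\}$; $C(K,\mathcal P)=\sup_{P_X\in\mathcal P}\sup_{y:(K\circ P_X)(y)>0}\ell_{K\times P_X}(X\to y)$; $\mathcal M(\varepsilon,c)$ is the set of kernels from $\mathcal X$ to any finite output set with $C(K,\mathcal Q_{\mathcal X}(c))\le\varepsilon$. For a set $\mathcal P\subseteq\mathcal P(\mathcal X)$, $\eta^{\mathcal P}_{\mathrm{TV}}(K)=\sup_{P_X,Q_X\in\mathcal P,\,P_X\ne Q_X}\frac{\mathrm{TV}(K\circ P_X\|K\circ Q_X)}{\mathrm{TV}(P_X\|Q_X)}$, and $\eta_{\mathrm{TV}}(K)=\eta^{\mathcal P(\mathcal X)}_{\mathrm{TV}}(K)$, where $\mathrm{TV}(P\|Q)=\frac12\sum|P-Q|$. Finally $\eta_{\mathrm{TV}}(\varepsilon,c)=\sup_{K\in\mathcal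 M(\varepsilon,c)}\eta_{\mathrm{TV}}(K)$. *)

theory Defs
  imports Complex_Main
begin

definition dists :: "('a::finite \<Rightarrow> real) set" where
  "dists = {P. (\<forall>x. P x \<ge> 0) \<and> (\<Sum>x\<in>UNIV. P x) = 1}"

definition Qc :: "real \<Rightarrow> ('a::finite \<Rightarrow> real) set" where
  "Qc c = {P \<in> dists. \<forall>x. P x \<ge> c}"

definition is_kernel :: "nat \<Rightarrow> ('a::finite \<Rightarrow> nat \<Rightarrow> real) \<Rightarrow> bool" where
  "is_kernel m K \<longleftrightarrow> (\<forall>x. (\<forall>y<m. K x y \<ge> 0) \<and> (\<forall>y\<ge>m. K x y = 0) \<and> (\<Sum>y<m. K x y) = 1)"

definition push :: "('a::finite \<Rightarrow> nat \<Rightarrow> real) \<Rightarrow> ('a \<Rightarrow> real) \<Rightarrow> nat \<Rightarrow> real" where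
  "push K P y = (\<Sum>x\<in>UNIV. K x y * P x)"

definition pml :: "('a::finite \<Rightarrow> nat \<Rightarrow> real) \<Rightarrow> ('a \<Rightarrow> real) \<Rightarrow> nat \<Rightarrow> real" where
  "pml K P y = ln (Max (range (\<lambda>x. K x y)) / push K P y)"

definition capC :: "nat \<Rightarrow> ('a::finite \<Rightarrow> nat \<Rightarrow> real) \<Rightarrow> ('a \<Rightarrow> real) set \<Rightarrow> real" where
  "capC m K PP = Sup {pml K P y | P y. P \<in> PP \<and> y < m \<and> push K P y > 0}"

definition Mset :: "real \<Rightarrow> real \<Rightarrow> (nat \<times> ('a::finite \<Rightarrow> nat \<Rightarrow> real)) set" where
  "Mset eps c = {(m, K). is_kernel m K \<and> capC m K (Qc c) \<le> eps}"

definition TV_in :: "('a::finite \<Rightarrow> real) \<Rightarrow> ('a \<Rightarrow> real) \<Rightarrow> real" where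
  "TV_in P Q = (1/2) * (\<Sum>x\<in>UNIV. \<bar>P x - Q x\<bar>)"

definition TV_out :: "nat \<Rightarrow> (nat \<Rightarrow> real) \<Rightarrow> (nat \<Rightarrow> real) \<Rightarrow> real" where
  "TV_out m P Q = (1/2) * (\<Sum>y<m. \<bar>P y - Q y\<bar>)"

definition eta_TV_on :: "nat \<Rightarrow> ('a::finite \<Rightarrow> nat \<Rightarrow> real) \<Rightarrow> ('a \<Rightarrow> real) set \<Rightarrow> real" where
  "eta_TV_on m K PP = Sup {TV_out m (push K P) (push K Q) / TV_in P Q | P Q. P \<in> PP \<and> Q \<in> PP \<and> P \<noteq> Q}"

definition eta_TV :: "nat \<Rightarrow> ('a::finite \<Rightarrow> nat \<Rightarrow> real) \<Rightarrow> real" where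
  "eta_TV m K = eta_TV_on m K dists"

definition eta_TV_eps_c :: "real \<Rightarrow> real \<Rightarrow> 'a::finite itself \<Rightarrow> real" where
  "eta_TV_eps_c eps c (_ :: 'a itself) = Sup ((\<lambda>(m, K). eta_TV m K) ` (Mset eps c :: (nat \<times> ('a \<Rightarrow> nat \<Rightarrow> real)) set))"

end

theory Submission
  imports Defs
begin

text \<open>The contraction \<open>D \<mapsto> (1 - s) U + s D\<close> towards the uniform distribution \<open>U\<close>, with
  \<open>s = 1 - c N > 0\<close>, maps every distribution into \<open>Q(c)\<close> and multiplies both the input and the
  output total variation distances by \<open>s\<close>. Hence every contraction ratio of a kernel on all of
  \<open>P(X)\<close> is already attained on \<open>Q(c)\<close>, so the contraction coefficient of each single
  kernel on \<open>Q(c)\<close> equals its unrestricted one.\<close>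

definition mix :: "real \<Rightarrow> ('b \<Rightarrow> real) \<Rightarrow> ('b \<Rightarrow> real) \<Rightarrow> 'b \<Rightarrow> real" where
  "mix s R D x = (1 - s) * R x + s * D x"

lemma mix_diff: "mix s R P x - mix s R Q x = s * (P x - Q x)"
  by (simp add: mix_def algebra_simps)

lemma mix_eq_iff:
  assumes "s \<noteq> 0"
  shows "mix s R P = mix s R Q \<longleftrightarrow> P = Q"
proof
  assume "mix s R P = mix s R Q"
  then have "s * (P x - Q x) = 0" for x
    by (metis mix_diff diff_self)
  with assms show "P = Q" by auto
qed simp

lemma push_mix: "push K (mix s R D) y = (1 - s) * push K R y + s * push K D y"
proof -
  have "push K (mix s R D) y = (\<Sum>x\<in>UNIV. (1 - s) * (K x y * R x) + s * (K x y * D x))"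
    unfolding push_def mix_def by (simp add: algebra_simps)
  then show ?thesis
    by (simp add: push_def sum.distrib sum_distrib_left)
qed

lemma TV_in_mix:
  assumes "0 \<le> s"
  shows "TV_in (mix s R P) (mix s R Q) = s * TV_in P Q"
  using assms by (simp add: TV_in_def mix_diff abs_mult sum_distrib_left)

lemma TV_out_push_mix:
  assumes "0 \<le> s"
  shows "TV_out m (push K (mix s R P)) (push K (mix s R Q)) = s * TV_out m (push K P) (push K Q)"
proof -
  have "push K (mix s R P) y - push K (mix s R Q) y = s * (push K P y - push K Q y)" for y
    by (simp add: push_mix algebra_simps)
  with assms show ?thesis
    by (simp add: TV_out_def abs_mult sum_distrib_left)
qed

lemma eta_TV_on_eq_eta_TV_if_mix_closed:
  assumes "PP \<subseteq> dists" and "0 < s" and "mix s R ` dists \<subseteq> PP"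
  shows "eta_TV_on m K PP = eta_TV m K"
proof -
  let ?ratios = "\<lambda>PP. {TV_out m (push K P) (push K Q) / TV_in P Q | P Q.
                         P \<in> PP \<and> Q \<in> PP \<and> P \<noteq> Q}"
  have "?ratios dists \<subseteq> ?ratios PP"
  proof
    fix r assume "r \<in> ?ratios dists"
    then obtain P Q where "P \<in> dists" "Q \<in> dists" "P \<noteq> Q"
      and r: "r = TV_out m (push K P) (push K Q) / TV_in P Q" by blast
    moreover have "r = TV_out m (push K (mix s R P)) (push K (mix s R Q))
                       / TV_in (mix s R P) (mix s R Q)"
      using \<open>0 < s\<close> by (simp add: r TV_out_push_mix TV_in_mix)
    ultimately show "r \<in> ?ratios PP"
      using assms(2,3) mix_eq_iff[of s R P Q] by blast
  qed
  moreover have "?ratios PP \<subseteq> ?ratios dists"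
    using assms(1) by blast
  ultimately have "?ratios PP = ?ratios dists" by blast
  then show ?thesis
    unfolding eta_TV_on_def eta_TV_def by simp
qed

lemma mix_uniform_in_Qc:
  fixes D :: "'a::finite \<Rightarrow> real" and c :: real
  assumes "D \<in> dists" and "0 \<le> c" and "c * card (UNIV :: 'a set) \<le> 1"
  shows "mix (1 - c * card (UNIV :: 'a set)) (\<lambda>_. 1 / card (UNIV :: 'a set)) D \<in> Qc c"
proof -
  define N where "N = real (card (UNIV :: 'a set))"
  have "N > 0" unfolding N_def by (simp add: finite_UNIV_card_ge_0)
  have D: "\<And>x. D x \<ge> 0" "(\<Sum>x\<in>UNIV. D x) = 1"
    using assms(1) by (auto simp: dists_def)
  have val: "mix (1 - c * N) (\<lambda>_. 1 / N) D x = c + (1 - c * N) * D x" for x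
    using \<open>N > 0\<close> by (simp add: mix_def field_simps)
  have "c * N \<le> 1" using assms(3) by (simp add: N_def)
  then have ge: "mix (1 - c * N) (\<lambda>_. 1 / N) D x \<ge> c" for x
    using D(1)[of x] by (simp add: val)
  have "(\<Sum>x\<in>UNIV. mix (1 - c * N) (\<lambda>_. 1 / N) D x) = c * N + (1 - c * N)"
    by (simp add: val sum.distrib D(2) flip: sum_distrib_left, simp add: N_def)
  then show ?thesis
    using ge order_trans[OF assms(2) ge]
    by (simp add: Qc_def dists_def N_def)
qed

lemma eta_TV_on_Qc:
  fixes K :: "'a::finite \<Rightarrow> nat \<Rightarrow> real"
  assumes "0 \<le> c" and "c < 1 / real (card (UNIV :: 'a set))"
  shows "eta_TV_on m K (Qc c) = eta_TV m K"
proof -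
  define N where "N = real (card (UNIV :: 'a set))"
  have "N > 0" unfolding N_def by (simp add: finite_UNIV_card_ge_0)
  then have "0 < 1 - c * N"
    using assms(2) by (simp add: N_def field_simps)
  moreover have "mix (1 - c * N) (\<lambda>_. 1 / N) D \<in> Qc c" if "D \<in> dists" for D :: "'a \<Rightarrow> real"
    using mix_uniform_in_Qc[OF that assms(1)] \<open>0 < 1 - c * N\<close> by (simp add: N_def)
  moreover have "Qc c \<subseteq> dists" by (auto simp: Qc_def)
  ultimately show ?thesis
    by (intro eta_TV_on_eq_eta_TV_if_mix_closed) auto
qed

theorem lemma2:
  fixes eps c :: real
  assumes "card (UNIV :: 'a::finite set) \<ge> 2"
    and "0 < c" and "c < 1 / real (card (UNIV :: 'a set))"
    and "eps \<ge> 0"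
  shows "eta_TV_eps_c eps c TYPE('a)
         = Sup ((\<lambda>(m, K). eta_TV_on m K (Qc c)) ` (Mset eps c :: (nat \<times> ('a \<Rightarrow> nat \<Rightarrow> real)) set))"
  using eta_TV_on_Qc[OF less_imp_le[OF assms(2)] assms(3)]
  by (simp add: eta_TV_eps_c_def case_prod_beta)

end
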